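(* Let $n\ge1$, $m\ge2$, $\alpha\in(0,1)$, $\bar g_a>0$, and let $W$ be a real $mn\times mn$ matrix satisfying (S), (A1), (A2), (A3) from the context, with largest eigenvalue $\mu_{\max}(W)$. If $\bar g_a>\alpha(\mu_{\max}(W)-2)$, then $(\bar s,\bar a)=(0,0)$ is the unique equilibrium of the system $$\dot{\bar s}=W\bar f(\bar s)-\bar s-\bar a,\qquad \dot{\bar a}=\bar g_a\bar f(\bar s)-\alpha\bar a,\qquad (\bar s,\bar a)\in\mathbb{R}^{mn}\times\mathbb{R}^{mn}.$$
   Context: For $s\in\mathbb{R}^{mn}$ write $s=(s_{11},\dots,s_{1m},\dots,s_{n1},\dots,s_{nm})^T$. Define $f_{ij}(s)=e^{s_{ij}}/\sum_{l=1}^m e^{s_{il}}$ and $\bar f(s)=f(s)-\frac1m\mathbf 1_{mn}$, where $\mathbf 1_k$ is the all-ones vector in $\mathbb{R}^k$. The matrix $W$ is viewed as an $n\times n$ array of $m\times m$ blocks $W_{i,k}$, and: (S) $W_{i,i}=0$; (A1) $W$ is symmetric; (A2) $W_{i,k}\mathbf 1_m=\lambda_{ik}\mathbf 1_m$ for scalars $\lambda_{ik}$; (A3) $\lambda_{ik}=\lambda_{ki}$. *)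

theory Defs
  imports "HOL-Analysis.Analysis"
begin

text \<open>Index set of R^{mn}: pairs (i,j) with i ranging over a finite type of size n
  (the populations) and j over a finite type of size m (the options).
  The vector s has entries s_{ij} = s $ (i,j).\<close>

definition softmax_f :: "real^('n::finite \<times> 'm::finite) \<Rightarrow> real^('n \<times> 'm)" where
  "softmax_f s = (\<chi> p. exp (s $ p) / (\<Sum>l\<in>UNIV. exp (s $ (fst p, l))))"

definition fbar :: "real^('n::finite \<times> 'm::finite) \<Rightarrow> real^('n \<times> 'm)" where
  "fbar s = softmax_f s - (\<chi> p. 1 / real CARD('m))"

definition mu_max :: "real^'k^'k \<Rightarrow> real" where
  "mu_max W = Max {\<mu>. \<exists>v. v \<noteq> 0 \<and> W *v v = \<mu> *\<^sub>R v}"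

definition is_equilibrium ::
  "real^('n::finite \<times> 'm::finite)^('n \<times> 'm) \<Rightarrow> real \<Rightarrow> real
     \<Rightarrow> real^('n \<times> 'm) \<Rightarrow> real^('n \<times> 'm) \<Rightarrow> bool" where
  "is_equilibrium W ga \<alpha> s a \<longleftrightarrow>
     W *v fbar s - s - a = 0 \<and> ga *\<^sub>R fbar s - \<alpha> *\<^sub>R a = 0"

end

theory Submission
  imports Defs
begin

text \<open>At an equilibrium the second equation gives \<open>a = \<beta> x\<close> with \<open>x = fbar s\<close> and
  \<open>\<beta> = ga / \<alpha>\<close>, and the first then gives \<open>s = W x - \<beta> x\<close>. On each population block,
  \<open>fbar s\<close> is the difference \<open>p - q\<close> of the softmax distribution and the uniform one, and
  \<open>\<Sum> (p - q) s\<close> equals the Jeffreys divergence \<open>\<Sum> (p - q) (ln p - ln q)\<close>, which is at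
  least \<open>2 \<Sum> (p - q)\<^sup>2\<close> (logarithmic mean below arithmetic mean, then Cauchy-Schwarz).
  Summing the blocks and using the Rayleigh bound for the symmetric matrix W,
  \<open>2 x\<bullet>x \<le> x\<bullet>s = x\<bullet>(W x) - \<beta> x\<bullet>x \<le> (mu_max W - \<beta>) x\<bullet>x\<close>, and \<open>\<beta> > mu_max W - 2\<close>
  forces \<open>x = 0\<close>, hence \<open>a = 0\<close> and \<open>s = 0\<close>.\<close>

lemma ln_ge_2_mult_diff_div_add:
  fixes r :: real
  assumes "1 \<le> r"
  shows "2 * (r - 1) / (r + 1) \<le> ln r"
proof -
  let ?f = "\<lambda>x::real. ln x - 2 * (x - 1) / (x + 1)"
  have "?f 1 \<le> ?f r"
  proof (rule DERIV_nonneg_imp_nondecreasing[OF assms])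
    fix x :: real
    assume x: "1 \<le> x" "x \<le> r"
    have "DERIV ?f x :> 1 / x - 4 / (x + 1)^2"
      using x by (auto intro!: derivative_eq_intros simp: field_simps power2_eq_square)
    moreover have "4 * x \<le> (x + 1)^2"
      using sum_squares_ge_zero[of "x - 1" 0] by (simp add: power2_eq_square algebra_simps)
    then have "1 / x - 4 / (x + 1)^2 \<ge> 0"
      using x by (simp add: field_simps)
    ultimately show "\<exists>y. DERIV ?f x :> y \<and> y \<ge> 0"
      by blast
  qed
  then show ?thesis
    by simp
qed

text \<open>The logarithmic mean \<open>(a - b) / (ln a - ln b)\<close> is at most the arithmetic mean,
  multiplied out so that no division by \<open>ln a - ln b\<close> occurs.\<close>
lemma log_mean_le_arith_mean:
  fixes a b :: real
  assumes "0 < a" "0 < b"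
  shows "2 * (a - b)^2 / (a + b) \<le> (a - b) * (ln a - ln b)"
proof -
  have ordered: "2 * (x - y)^2 / (x + y) \<le> (x - y) * (ln x - ln y)"
    if "0 < y" "y \<le> x" for x y :: real
  proof -
    have "2 * (x / y - 1) / (x / y + 1) \<le> ln (x / y)"
      using that by (intro ln_ge_2_mult_diff_div_add) simp
    moreover have "2 * (x / y - 1) / (x / y + 1) = 2 * (x - y) / (x + y)"
      using that by (simp add: divide_simps)
    ultimately have ln_bound: "2 * (x - y) / (x + y) \<le> ln x - ln y"
      using that by (simp add: ln_div)
    have "2 * (x - y)^2 / (x + y) = (x - y) * (2 * (x - y) / (x + y))"
      by (simp add: power2_eq_square)
    also have "\<dots> \<le> (x - y) * (ln x - ln y)"
      using that ln_bound by (intro mult_left_mono) auto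
    finally show ?thesis .
  qed
  show ?thesis
    using ordered[of b a] ordered[of a b] assms
    by (cases "b \<le> a") (simp_all add: add.commute power2_commute algebra_simps)
qed

text \<open>The positive and the negative parts of \<open>d\<close> both sum to half of \<open>\<Sum>\<bar>d\<bar>\<close>, so every
  \<open>\<bar>d j\<bar>\<close> is at most that half.\<close>
lemma two_sum_power2_le_sum_abs_power2:
  fixes d :: "'a \<Rightarrow> real"
  assumes "finite A" "(\<Sum>j\<in>A. d j) = 0"
  shows "2 * (\<Sum>j\<in>A. (d j)^2) \<le> (\<Sum>j\<in>A. \<bar>d j\<bar>)^2"
proof -
  define S where "S = (\<Sum>j\<in>A. \<bar>d j\<bar>)"
  have half: "\<bar>d j\<bar> \<le> S / 2" if j: "j \<in> A" for j
  proof -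
    have "\<bar>d j\<bar> + d j \<le> (\<Sum>j\<in>A. \<bar>d j\<bar> + d j)" "\<bar>d j\<bar> - d j \<le> (\<Sum>j\<in>A. \<bar>d j\<bar> - d j)"
      using assms(1) by (intro member_le_sum j; simp)+
    moreover have "(\<Sum>j\<in>A. \<bar>d j\<bar> + d j) = S" "(\<Sum>j\<in>A. \<bar>d j\<bar> - d j) = S"
      using assms unfolding S_def by (simp_all add: sum.distrib sum_subtractf)
    ultimately show ?thesis
      by linarith
  qed
  have "(\<Sum>j\<in>A. (d j)^2) = (\<Sum>j\<in>A. \<bar>d j\<bar> * \<bar>d j\<bar>)"
    by (simp add: power2_eq_square)
  also have "\<dots> \<le> (\<Sum>j\<in>A. \<bar>d j\<bar> * (S / 2))"
    using half by (intro sum_mono mult_left_mono) auto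
  also have "\<dots> = S * S / 2"
    unfolding sum_distrib_right[symmetric] S_def by simp
  finally show ?thesis
    by (simp add: S_def power2_eq_square)
qed

lemma sum_abs_power2_le_weighted:
  fixes d w :: "'a \<Rightarrow> real"
  assumes "\<And>j. j \<in> A \<Longrightarrow> 0 < w j"
  shows "(\<Sum>j\<in>A. \<bar>d j\<bar>)^2 \<le> (\<Sum>j\<in>A. (d j)^2 / w j) * (\<Sum>j\<in>A. w j)"
proof -
  have "(\<Sum>j\<in>A. (\<bar>d j\<bar> / sqrt (w j)) * sqrt (w j))^2
        \<le> (\<Sum>j\<in>A. (\<bar>d j\<bar> / sqrt (w j))^2) * (\<Sum>j\<in>A. (sqrt (w j))^2)"
    by (rule Cauchy_Schwarz_ineq_sum)
  moreover have "(\<bar>d j\<bar> / sqrt (w j)) * sqrt (w j) = \<bar>d j\<bar>"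
    "(\<bar>d j\<bar> / sqrt (w j))^2 = (d j)^2 / w j" "(sqrt (w j))^2 = w j" if "j \<in> A" for j
    using assms[OF that] by (simp_all add: power_divide)
  ultimately show ?thesis
    by (simp cong: sum.cong)
qed

lemma two_sum_power2_diff_le_Jeffreys:
  fixes p q :: "'a \<Rightarrow> real"
  assumes "finite A"
    and pos: "\<And>j. j \<in> A \<Longrightarrow> 0 < p j" "\<And>j. j \<in> A \<Longrightarrow> 0 < q j"
    and "(\<Sum>j\<in>A. p j) = 1" "(\<Sum>j\<in>A. q j) = 1"
  shows "2 * (\<Sum>j\<in>A. (p j - q j)^2) \<le> (\<Sum>j\<in>A. (p j - q j) * (ln (p j) - ln (q j)))"
proof -
  have zero_sum: "(\<Sum>j\<in>A. p j - q j) = 0" and sums: "(\<Sum>j\<in>A. p j + q j) = 2"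
    using assms by (simp_all add: sum_subtractf sum.distrib)
  have "2 * (\<Sum>j\<in>A. (p j - q j)^2) \<le> (\<Sum>j\<in>A. \<bar>p j - q j\<bar>)^2"
    using \<open>finite A\<close> zero_sum by (rule two_sum_power2_le_sum_abs_power2)
  also have "\<dots> \<le> (\<Sum>j\<in>A. (p j - q j)^2 / (p j + q j)) * 2"
    using sum_abs_power2_le_weighted[of A "\<lambda>j. p j + q j" "\<lambda>j. p j - q j"] pos sums
    by (simp add: add_pos_pos)
  also have "\<dots> = (\<Sum>j\<in>A. 2 * (p j - q j)^2 / (p j + q j))"
    by (simp add: sum_distrib_left mult.commute)
  also have "\<dots> \<le> (\<Sum>j\<in>A. (p j - q j) * (ln (p j) - ln (q j)))"
    using pos by (intro sum_mono log_mean_le_arith_mean) auto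
  finally show ?thesis .
qed

lemma fbar_0: "fbar 0 = 0"
  by (simp add: fbar_def softmax_f_def vec_eq_iff)

lemma two_sum_power2_fbar_block_le:
  fixes s :: "real^('n::finite \<times> 'm::finite)"
  shows "2 * (\<Sum>j\<in>UNIV. (fbar s $ (i, j))^2) \<le> (\<Sum>j\<in>UNIV. fbar s $ (i, j) * s $ (i, j))"
proof -
  define Z where "Z = (\<Sum>l\<in>UNIV. exp (s $ (i, l)))"
  define p where "p j = exp (s $ (i, j)) / Z" for j
  define q :: "'m \<Rightarrow> real" where "q j = 1 / real CARD('m)" for j
  have "0 < Z"
    unfolding Z_def by (rule sum_pos) auto
  then have pos: "0 < p j" "0 < q j" and sums: "(\<Sum>j\<in>UNIV. p j) = 1" "(\<Sum>j\<in>UNIV. q j) = 1" for j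
    by (simp_all add: p_def q_def Z_def sum_divide_distrib[symmetric])
  have fbar_block: "fbar s $ (i, j) = p j - q j" for j
    by (simp add: fbar_def softmax_f_def p_def q_def Z_def)
  have ln_diff: "ln (p j) - ln (q j) = s $ (i, j) + (ln (real CARD('m)) - ln Z)" for j
    using \<open>0 < Z\<close> by (simp add: p_def q_def ln_div)
  have "2 * (\<Sum>j\<in>UNIV. (p j - q j)^2) \<le> (\<Sum>j\<in>UNIV. (p j - q j) * (ln (p j) - ln (q j)))"
    using pos sums by (intro two_sum_power2_diff_le_Jeffreys) auto
  also have "\<dots> = (\<Sum>j\<in>UNIV. (p j - q j) * s $ (i, j))
                  + (\<Sum>j\<in>UNIV. p j - q j) * (ln (real CARD('m)) - ln Z)"
    unfolding ln_diff by (simp add: distrib_left sum.distrib sum_distrib_right)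
  also have "\<dots> = (\<Sum>j\<in>UNIV. (p j - q j) * s $ (i, j))"
    using sums by (simp add: sum_subtractf)
  finally show ?thesis
    by (simp add: fbar_block)
qed

lemma two_inner_fbar_self_le_inner_fbar:
  fixes s :: "real^('n::finite \<times> 'm::finite)"
  shows "2 * (fbar s \<bullet> fbar s) \<le> fbar s \<bullet> s"
proof -
  have inner_blocks: "x \<bullet> y = (\<Sum>i\<in>UNIV. \<Sum>j\<in>UNIV. x $ (i, j) * y $ (i, j))"
    for x y :: "real^('n \<times> 'm)"
    by (simp add: inner_vec_def sum.cartesian_product UNIV_Times_UNIV[symmetric] del: UNIV_Times_UNIV)
  have "2 * (fbar s \<bullet> fbar s) = (\<Sum>i\<in>UNIV. 2 * (\<Sum>j\<in>UNIV. (fbar s $ (i, j))^2))"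
    by (simp add: inner_blocks sum_distrib_left power2_eq_square)
  also have "\<dots> \<le> (\<Sum>i\<in>UNIV. \<Sum>j\<in>UNIV. fbar s $ (i, j) * s $ (i, j))"
    by (intro sum_mono two_sum_power2_fbar_block_le)
  also have "\<dots> = fbar s \<bullet> s"
    by (simp add: inner_blocks)
  finally show ?thesis .
qed

lemma inner_symmetric_matrix:
  fixes W :: "real^'k^'k"
  assumes "transpose W = W"
  shows "u \<bullet> (W *v v) = (W *v u) \<bullet> v"
  by (metis assms dot_lmul_matrix transpose_matrix_vector)

lemma finite_eigenvalues_symmetric:
  fixes W :: "real^'k^'k"
  assumes sym: "transpose W = W"
  shows "finite {\<mu>. \<exists>v. v \<noteq> 0 \<and> W *v v = \<mu> *\<^sub>R v}"
proof -
  define E where "E = {\<mu>. \<exists>v. v \<noteq> 0 \<and> W *v v = \<mu> *\<^sub>R v}"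
  define ev where "ev \<mu> = (SOME v. v \<noteq> 0 \<and> W *v v = \<mu> *\<^sub>R v)" for \<mu>
  have ev: "ev \<mu> \<noteq> 0 \<and> W *v ev \<mu> = \<mu> *\<^sub>R ev \<mu>" if "\<mu> \<in> E" for \<mu>
    using that unfolding E_def ev_def by (metis (mono_tags, lifting) mem_Collect_eq)
  have orth: "ev \<kappa> \<bullet> ev \<mu> = 0" if "\<kappa> \<in> E" "\<mu> \<in> E" "\<kappa> \<noteq> \<mu>" for \<kappa> \<mu>
  proof -
    have "\<kappa> * (ev \<kappa> \<bullet> ev \<mu>) = ev \<kappa> \<bullet> (W *v ev \<mu>)"
      using ev[OF that(1)] inner_symmetric_matrix[OF sym] by simp
    also have "\<dots> = \<mu> * (ev \<kappa> \<bullet> ev \<mu>)"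
      using ev[OF that(2)] by simp
    finally show ?thesis
      using that(3) by simp
  qed
  then have "inj_on ev E"
    using ev by (fastforce intro: inj_onI)
  moreover have "independent (ev ` E)"
    using orth ev by (intro pairwise_orthogonal_independent) (auto simp: pairwise_def orthogonal_def)
  then have "finite (ev ` E)"
    using independent_bound by blast
  ultimately show ?thesis
    unfolding E_def[symmetric] using finite_imageD by blast
qed

lemma linear_coeff_eq_0_if_quadratic_nonneg:
  fixes a b :: real
  assumes "\<And>t. 0 \<le> b * t + a * t^2"
  shows "b = 0"
proof (rule ccontr)
  assume "b \<noteq> 0"
  define c where "c = \<bar>a\<bar> + 1"
  define t where "t = - b / c"
  have "0 < c"
    by (simp add: c_def add_nonneg_pos)
  then have "b * t + a * t^2 = b^2 * (a - c) / c^2"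
    by (simp add: t_def field_simps power2_eq_square)
  also have "\<dots> < 0"
    using \<open>b \<noteq> 0\<close> \<open>0 < c\<close> by (intro divide_neg_pos mult_pos_neg) (auto simp: c_def)
  finally show False
    using assms[of t] by simp
qed

text \<open>Perturbing \<open>x\<close> in the direction \<open>y = W x - M x\<close>, the defect of the bound is
  \<open>-2 t (y\<bullet>y) + O(t\<^sup>2)\<close>; it can only stay nonnegative if \<open>y = 0\<close>.\<close>
lemma eigenvector_if_quadratic_form_maximal:
  fixes W :: "real^'k^'k"
  assumes sym: "transpose W = W"
    and bound: "\<And>v. v \<bullet> (W *v v) \<le> M * (v \<bullet> v)"
    and attained: "x \<bullet> (W *v x) = M * (x \<bullet> x)"
  shows "W *v x = M *\<^sub>R x"
proof -
  define y where "y = W *v x - M *\<^sub>R x"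
  have yy: "y \<bullet> y = y \<bullet> (W *v x) - M * (y \<bullet> x)"
    by (simp add: y_def inner_diff_right)
  have "0 \<le> (- 2 * (y \<bullet> y)) * t + (M * (y \<bullet> y) - y \<bullet> (W *v y)) * t^2" for t
  proof -
    have "x \<bullet> (W *v y) = y \<bullet> (W *v x)"
      using inner_symmetric_matrix[OF sym] by (simp add: inner_commute)
    then have Q: "(x + t *\<^sub>R y) \<bullet> (W *v (x + t *\<^sub>R y))
        = M * (x \<bullet> x) + 2 * t * (y \<bullet> (W *v x)) + t^2 * (y \<bullet> (W *v y))"
      using attained by (simp add: algebra_simps power2_eq_square)
    have N: "(x + t *\<^sub>R y) \<bullet> (x + t *\<^sub>R y) = x \<bullet> x + 2 * t * (y \<bullet> x) + t^2 * (y \<bullet> y)"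
      by (simp add: inner_commute[of x y] algebra_simps power2_eq_square)
    have "M * ((x + t *\<^sub>R y) \<bullet> (x + t *\<^sub>R y)) - (x + t *\<^sub>R y) \<bullet> (W *v (x + t *\<^sub>R y))
        = (- 2 * (y \<bullet> y)) * t + (M * (y \<bullet> y) - y \<bullet> (W *v y)) * t^2"
      by (simp only: Q N yy) (simp add: algebra_simps power2_eq_square)
    then show ?thesis
      using bound[of "x + t *\<^sub>R y"] by linarith
  qed
  then have "y \<bullet> y = 0"
    using linear_coeff_eq_0_if_quadratic_nonneg by fastforce
  then show ?thesis
    by (simp add: y_def)
qed

text \<open>The maximum of the quadratic form on the unit sphere is attained, and by the previous
  lemma it is an eigenvalue, hence at most \<open>mu_max W\<close>.\<close>
lemma quadratic_form_le_mu_max: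
  fixes W :: "real^'k^'k"
  assumes sym: "transpose W = W"
  shows "x \<bullet> (W *v x) \<le> mu_max W * (x \<bullet> x)"
proof -
  let ?Q = "\<lambda>v. v \<bullet> (W *v v)"
  have cont: "continuous_on (sphere 0 1) ?Q"
    by (intro continuous_intros linear_continuous_on matrix_vector_mul_linear)
  obtain x0 where x0: "x0 \<in> sphere 0 1" and max: "\<And>y. y \<in> sphere 0 1 \<Longrightarrow> ?Q y \<le> ?Q x0"
    using continuous_attains_sup[OF compact_sphere _ cont] by auto
  define M where "M = ?Q x0"
  have bound: "?Q v \<le> M * (v \<bullet> v)" for v
  proof (cases "v = 0")
    case False
    define u where "u = (1 / norm v) *\<^sub>R v"
    have "?Q u \<le> M"
      using max[of u] False by (simp add: M_def u_def)
    moreover have "?Q u = ?Q v / (v \<bullet> v)"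
      using False by (simp add: u_def matrix_vector_mult_scaleR dot_square_norm power2_eq_square)
    moreover have "0 < v \<bullet> v"
      using False by simp
    ultimately show ?thesis
      by (simp add: divide_le_eq mult.commute)
  qed simp
  have "x0 \<bullet> x0 = 1"
    using x0 by (simp add: dot_square_norm)
  then have "W *v x0 = M *\<^sub>R x0"
    by (intro eigenvector_if_quadratic_form_maximal[OF sym bound]) (simp add: M_def)
  moreover have "x0 \<noteq> 0"
    using x0 by auto
  ultimately have "M \<le> mu_max W"
    unfolding mu_max_def by (intro Max_ge finite_eigenvalues_symmetric[OF sym]) blast
  then show ?thesis
    using bound[of x] by (meson inner_ge_zero mult_right_mono order_trans)
qed

lemma equilibrium_fbar_eq_0:
  fixes W :: "real^('n::finite \<times> 'm::finite)^('n \<times> 'm)"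
  assumes eq: "is_equilibrium W ga \<alpha> s a"
    and "0 < \<alpha>" "transpose W = W" "ga > \<alpha> * (mu_max W - 2)"
  shows "fbar s = 0"
proof -
  define x where "x = fbar s"
  define \<beta> where "\<beta> = ga / \<alpha>"
  have "a = (1 / \<alpha>) *\<^sub>R (\<alpha> *\<^sub>R a)"
    using \<open>0 < \<alpha>\<close> by simp
  also have "\<alpha> *\<^sub>R a = ga *\<^sub>R x"
    using eq by (simp add: is_equilibrium_def x_def)
  finally have "a = \<beta> *\<^sub>R x"
    by (simp add: \<beta>_def)
  then have s: "s = W *v x - \<beta> *\<^sub>R x"
    using eq by (simp add: is_equilibrium_def x_def algebra_simps)
  have "2 * (x \<bullet> x) \<le> x \<bullet> s"
    unfolding x_def by (rule two_inner_fbar_self_le_inner_fbar)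
  also have "\<dots> = x \<bullet> (W *v x) - \<beta> * (x \<bullet> x)"
    by (simp add: s inner_diff_right)
  also have "\<dots> \<le> (mu_max W - \<beta>) * (x \<bullet> x)"
    using quadratic_form_le_mu_max[OF \<open>transpose W = W\<close>] by (simp add: algebra_simps)
  finally have "(2 + \<beta> - mu_max W) * (x \<bullet> x) \<le> 0"
    by (simp add: algebra_simps)
  moreover have "mu_max W - 2 < \<beta>"
    using assms by (simp add: \<beta>_def pos_less_divide_eq mult.commute)
  ultimately have "x \<bullet> x \<le> 0"
    by (simp add: mult_le_0_iff)
  then have "x = 0"
    by (metis inner_gt_zero_iff not_le)
  then show ?thesis
    by (simp add: x_def)
qed

theorem proposition1:
  fixes W :: "real^('n::finite \<times> 'm::finite)^('n \<times> 'm)"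
    and \<alpha> ga :: real
  assumes m2: "CARD('m) \<ge> 2"
    and alpha: "0 < \<alpha>" "\<alpha> < 1"
    and ga_pos: "ga > 0"
    and S: "\<forall>i j l. W $ (i, j) $ (i, l) = 0"
    and A1: "transpose W = W"
    and A23: "\<exists>lam :: 'n \<Rightarrow> 'n \<Rightarrow> real.
               (\<forall>i k j. (\<Sum>l\<in>UNIV. W $ (i, j) $ (k, l)) = lam i k) \<and>
               (\<forall>i k. lam i k = lam k i)"
    and gain: "ga > \<alpha> * (mu_max W - 2)"
  shows "is_equilibrium W ga \<alpha> 0 0 \<and>
         (\<forall>s a. is_equilibrium W ga \<alpha> s a \<longrightarrow> s = 0 \<and> a = 0)"
  \<comment> \<open>Only the symmetry (A1) enters.\<close>
proof -
  have "is_equilibrium W ga \<alpha> 0 0"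
    by (simp add: is_equilibrium_def fbar_0)
  moreover have "s = 0 \<and> a = 0" if eq: "is_equilibrium W ga \<alpha> s a" for s a
  proof -
    have "fbar s = 0"
      using eq alpha(1) A1 gain by (rule equilibrium_fbar_eq_0)
    with eq alpha(1) show ?thesis
      by (auto simp: is_equilibrium_def)
  qed
  ultimately show ?thesis
    by blast
qed

end
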